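(* Let $n \in \mathbb N$ and $F\colon\mathbb R_+^n\to \mathbb R_+$. If $F$ is amenable, monotone and quasi-subadditive with a constant $s \geqslant 1$, then $F$ is $(n)$-b-metric preserving, i.e. $F\in P^n_B$.
   Context: $\mathbb R_+=[0,\infty)$. For $\mathbf a,\mathbf b\in\mathbb R_+^n$, $\mathbf a\preceq\mathbf b$ means $a_i\leqslant b_i$ for all $i$, and $\mathbf a+\mathbf b$ is the coordinatewise sum. $F$ is amenable if $F(\mathbf x)=0\iff\mathbf x=(0,\dots,0)$; monotone if $F(\mathbf a)\leqslant F(\mathbf b)$ whenever $\mathbf a\preceq\mathbf b$; quasi-subadditive with constant $s\geqslant1$ if $F(\mathbf a+\mathbf b)\leqslant s(F(\mathbf a)+F(\mathbf b))$ for all $\mathbf a,\mathbf b\in\mathbb R_+^n$. A b-metric on $X$ is $d\colon X^2\to\mathbb R_+$ with $d(x,y)=0\iff x=y$, $d(x,y)=d(y,x)$, and for some $K\geqslant1$, $d(x,z)\leqslant K(d(x,y)+d(y,z))$ for all $x,y,z$. $P^n_B$ is the set of $F$ such that for every collection of b-metric spaces $(X_i,d_i)$, $i=1,\dots,n$ (arbitrary constants), the function $D(\mathbf x,\mathbf y)=F(d_1(x_1,y_1),\dots,d_n(x_n,y_n))$ on $\prod_{i=1}^nX_i$ is a b-metric. *)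

theory Defs
  imports "HOL-Analysis.Analysis"
begin

definition b_metric_on :: "'a set \<Rightarrow> ('a \<Rightarrow> 'a \<Rightarrow> real) \<Rightarrow> bool" where
  "b_metric_on X d \<longleftrightarrow>
     (\<forall>x\<in>X. \<forall>y\<in>X. d x y \<ge> 0) \<and>
     (\<forall>x\<in>X. \<forall>y\<in>X. d x y = 0 \<longleftrightarrow> x = y) \<and>
     (\<forall>x\<in>X. \<forall>y\<in>X. d x y = d y x) \<and>
     (\<exists>K\<ge>1. \<forall>x\<in>X. \<forall>y\<in>X. \<forall>z\<in>X. d x z \<le> K * (d x y + d y z))"

text \<open>Vectors in R_+^n, indexed by a finite type 'n with CARD('n) = n.\<close>
definition nonneg_vec :: "real^'n \<Rightarrow> bool" where
  "nonneg_vec a \<longleftrightarrow> (\<forall>i. 0 \<le> a $ i)"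

definition amenable :: "(real^'n \<Rightarrow> real) \<Rightarrow> bool" where
  "amenable F \<longleftrightarrow> (\<forall>x. nonneg_vec x \<longrightarrow> (F x = 0 \<longleftrightarrow> x = 0))"

definition monotone_F :: "(real^'n \<Rightarrow> real) \<Rightarrow> bool" where
  "monotone_F F \<longleftrightarrow> (\<forall>a b. nonneg_vec a \<and> nonneg_vec b \<and> (\<forall>i. a $ i \<le> b $ i) \<longrightarrow> F a \<le> F b)"

definition quasi_subadditive :: "real \<Rightarrow> (real^'n \<Rightarrow> real) \<Rightarrow> bool" where
  "quasi_subadditive s F \<longleftrightarrow> s \<ge> 1 \<and>
     (\<forall>a b. nonneg_vec a \<and> nonneg_vec b \<longrightarrow> F (a + b) \<le> s * (F a + F b))"

text \<open>F is (n)-b-metric preserving (F \<in> P^n_B), for b-metric spaces whose carriers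
  live in the type 'a (the type is universally quantified at the theorem level).\<close>
definition b_metric_preserving :: "'a itself \<Rightarrow> (real^'n \<Rightarrow> real) \<Rightarrow> bool" where
  "b_metric_preserving _ F \<longleftrightarrow>
     (\<forall>(X :: 'n \<Rightarrow> 'a set) (d :: 'n \<Rightarrow> 'a \<Rightarrow> 'a \<Rightarrow> real).
        (\<forall>i. b_metric_on (X i) (d i)) \<longrightarrow>
        b_metric_on {x :: 'a^'n. \<forall>i. x $ i \<in> X i}
                    (\<lambda>x y. F (\<chi> i. d i (x $ i) (y $ i))))"

end

theory Submission
  imports Defs
begin

text \<open>Taking the maximum of the finitely many coordinate constants, the b-triangle inequalities
  give \<open>d(x,z) \<preceq> K (d(x,y) + d(y,z))\<close> coordinatewise. Monotonicity carries this through \<open>F\<close>;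
  choosing \<open>2^m \<ge> K\<close>, quasi-subadditivity applied \<open>m\<close> times gives \<open>F(K v) \<le> (2s)^m F(v)\<close>, and
  once more \<open>F(a + b) \<le> s (F a + F b)\<close>. Amenability yields the identity of indiscernibles.\<close>

lemma nonneg_vec_add: "nonneg_vec a \<Longrightarrow> nonneg_vec b \<Longrightarrow> nonneg_vec (a + b)"
  by (simp add: nonneg_vec_def)

lemma nonneg_vec_scaleR: "0 \<le> c \<Longrightarrow> nonneg_vec a \<Longrightarrow> nonneg_vec (c *\<^sub>R a)"
  by (simp add: nonneg_vec_def)

lemma quasi_subadditive_ge_1: "quasi_subadditive s F \<Longrightarrow> 1 \<le> s"
  by (simp add: quasi_subadditive_def)

lemma quasi_subadditive_scaleR_pow2:
  assumes F: "quasi_subadditive s F" and v: "nonneg_vec v"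
  shows "F ((2::real) ^ m *\<^sub>R v) \<le> (2 * s) ^ m * F v"
proof (induction m)
  case 0
  then show ?case by simp
next
  case (Suc m)
  let ?w = "(2::real) ^ m *\<^sub>R v"
  have w: "nonneg_vec ?w"
    using v by (simp add: nonneg_vec_scaleR)
  have "F ((2::real) ^ Suc m *\<^sub>R v) = F (?w + ?w)"
    by (simp add: scaleR_add_left [symmetric])
  also have "\<dots> \<le> s * (F ?w + F ?w)"
    using F w unfolding quasi_subadditive_def by blast
  also have "\<dots> \<le> s * ((2 * s) ^ m * F v + (2 * s) ^ m * F v)"
    using Suc quasi_subadditive_ge_1 [OF F] by (intro mult_left_mono add_mono) auto
  also have "\<dots> = (2 * s) ^ Suc m * F v"
    by (simp add: algebra_simps)
  finally show ?case .
qed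

lemma monotone_quasi_subadditive_scaleR_le:
  assumes mono: "monotone_F F" and F: "quasi_subadditive s F" and "0 \<le> c"
  obtains C where "1 \<le> C" "\<And>v. nonneg_vec v \<Longrightarrow> F (c *\<^sub>R v) \<le> C * F v"
proof -
  obtain m where m: "c < (2::real) ^ m"
    using real_arch_pow [of 2 c] by auto
  have "F (c *\<^sub>R v) \<le> (2 * s) ^ m * F v" if v: "nonneg_vec v" for v
  proof -
    have "\<forall>i. (c *\<^sub>R v) $ i \<le> ((2::real) ^ m *\<^sub>R v) $ i"
      using v m by (simp add: nonneg_vec_def mult_right_mono)
    moreover have "nonneg_vec (c *\<^sub>R v)" "nonneg_vec ((2::real) ^ m *\<^sub>R v)"
      using v \<open>0 \<le> c\<close> by (simp_all add: nonneg_vec_scaleR)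
    ultimately have "F (c *\<^sub>R v) \<le> F ((2::real) ^ m *\<^sub>R v)"
      using mono unfolding monotone_F_def by blast
    also have "\<dots> \<le> (2 * s) ^ m * F v"
      by (rule quasi_subadditive_scaleR_pow2 [OF F v])
    finally show ?thesis .
  qed
  moreover have "1 \<le> (2 * s) ^ m"
    using quasi_subadditive_ge_1 [OF F] by (intro one_le_power) simp
  ultimately show thesis
    using that by blast
qed

lemma monotone_quasi_subadditive_triangle:
  fixes F :: "real^'n \<Rightarrow> real"
  assumes mono: "monotone_F F" and F: "quasi_subadditive s F" and "0 \<le> K"
  obtains C where "1 \<le> C"
    "\<And>a b c. nonneg_vec a \<Longrightarrow> nonneg_vec b \<Longrightarrow> nonneg_vec c \<Longrightarrow>
      \<forall>i. c $ i \<le> K * (a $ i + b $ i) \<Longrightarrow> F c \<le> C * (F a + F b)"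
proof -
  obtain C where C: "1 \<le> C" "\<And>v. nonneg_vec v \<Longrightarrow> F (K *\<^sub>R v) \<le> C * F v"
    using monotone_quasi_subadditive_scaleR_le [OF mono F \<open>0 \<le> K\<close>] by metis
  show thesis
  proof (rule that)
    show "1 \<le> C * s"
      using C(1) quasi_subadditive_ge_1 [OF F] by (rule mult_ge1_I)
    fix a b c :: "real^'n"
    assume a: "nonneg_vec a" and b: "nonneg_vec b" and c: "nonneg_vec c"
      and le: "\<forall>i. c $ i \<le> K * (a $ i + b $ i)"
    have ab: "nonneg_vec (a + b)"
      by (rule nonneg_vec_add [OF a b])
    have "F c \<le> F (K *\<^sub>R (a + b))"
      using mono c le nonneg_vec_scaleR [OF \<open>0 \<le> K\<close> ab] unfolding monotone_F_def by simp
    also have "\<dots> \<le> C * F (a + b)"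
      by (rule C(2) [OF ab])
    also have "\<dots> \<le> C * (s * (F a + F b))"
      using F a b C(1) unfolding quasi_subadditive_def by (intro mult_left_mono) auto
    finally show "F c \<le> C * s * (F a + F b)"
      by (simp only: mult.assoc)
  qed
qed

lemma b_metric_on_common_constant:
  fixes d :: "'n::finite \<Rightarrow> 'a \<Rightarrow> 'a \<Rightarrow> real"
  assumes "\<And>i. b_metric_on (X i) (d i)"
  obtains K where "1 \<le> K"
    "\<And>i x y z. x \<in> X i \<Longrightarrow> y \<in> X i \<Longrightarrow> z \<in> X i \<Longrightarrow> d i x z \<le> K * (d i x y + d i y z)"
proof -
  obtain K where K: "\<And>i. 1 \<le> K i"
    "\<And>i x y z. x \<in> X i \<Longrightarrow> y \<in> X i \<Longrightarrow> z \<in> X i \<Longrightarrow> d i x z \<le> K i * (d i x y + d i y z)"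
    using assms unfolding b_metric_on_def by metis
  let ?K = "Max (range K)"
  have K_le: "K i \<le> ?K" for i
    by simp
  show thesis
  proof (rule that)
    show "1 \<le> ?K"
      using K(1) K_le order_trans by blast
    fix i x y z
    assume xyz: "x \<in> X i" "y \<in> X i" "z \<in> X i"
    have "d i x z \<le> K i * (d i x y + d i y z)"
      using K(2) xyz .
    also have "\<dots> \<le> ?K * (d i x y + d i y z)"
      using assms [of i] xyz by (intro mult_right_mono K_le) (simp add: b_metric_on_def)
    finally show "d i x z \<le> ?K * (d i x y + d i y z)" .
  qed
qed

definition coord_dists :: "('n \<Rightarrow> 'a \<Rightarrow> 'a \<Rightarrow> real) \<Rightarrow> 'a^'n \<Rightarrow> 'a^'n \<Rightarrow> real^'n" where
  "coord_dists d x y = (\<chi> i. d i (x $ i) (y $ i))"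

context
  fixes X :: "'n::finite \<Rightarrow> 'a set" and d :: "'n \<Rightarrow> 'a \<Rightarrow> 'a \<Rightarrow> real"
  assumes b_metric: "\<And>i. b_metric_on (X i) (d i)"
begin

lemma nonneg_vec_coord_dists:
  "\<forall>i. x $ i \<in> X i \<Longrightarrow> \<forall>i. y $ i \<in> X i \<Longrightarrow> nonneg_vec (coord_dists d x y)"
  using b_metric by (simp add: nonneg_vec_def coord_dists_def b_metric_on_def)

lemma coord_dists_eq_0_iff:
  "\<forall>i. x $ i \<in> X i \<Longrightarrow> \<forall>i. y $ i \<in> X i \<Longrightarrow> coord_dists d x y = 0 \<longleftrightarrow> x = y"
  using b_metric by (simp add: coord_dists_def b_metric_on_def vec_eq_iff)

lemma coord_dists_commute:
  "\<forall>i. x $ i \<in> X i \<Longrightarrow> \<forall>i. y $ i \<in> X i \<Longrightarrow> coord_dists d x y = coord_dists d y x"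
  using b_metric by (simp add: coord_dists_def b_metric_on_def vec_eq_iff)

lemma coord_dists_triangle:
  obtains K where "0 \<le> K"
    "\<And>x y z. \<forall>i. x $ i \<in> X i \<Longrightarrow> \<forall>i. y $ i \<in> X i \<Longrightarrow> \<forall>i. z $ i \<in> X i \<Longrightarrow>
      \<forall>i. coord_dists d x z $ i \<le> K * (coord_dists d x y $ i + coord_dists d y z $ i)"
proof -
  obtain K where K: "1 \<le> K"
    "\<And>i x y z. x \<in> X i \<Longrightarrow> y \<in> X i \<Longrightarrow> z \<in> X i \<Longrightarrow> d i x z \<le> K * (d i x y + d i y z)"
    using b_metric_on_common_constant [of X d, OF b_metric] by metis
  show thesis
  proof (rule that)
    show "0 \<le> K"
      using K(1) by simp
  qed (simp add: coord_dists_def K(2))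
qed

lemma b_metric_on_compose:
  fixes F :: "real^'n \<Rightarrow> real"
  assumes nonneg: "\<forall>v. nonneg_vec v \<longrightarrow> F v \<ge> 0"
    and "amenable F" and mono: "monotone_F F" and F: "quasi_subadditive s F"
  shows "b_metric_on {x. \<forall>i. x $ i \<in> X i} (\<lambda>x y. F (coord_dists d x y))"
proof -
  let ?Y = "{x. \<forall>i. x $ i \<in> X i}"
  let ?D = "coord_dists d"
  obtain K where K: "0 \<le> K"
    "\<And>x y z. \<forall>i. x $ i \<in> X i \<Longrightarrow> \<forall>i. y $ i \<in> X i \<Longrightarrow> \<forall>i. z $ i \<in> X i \<Longrightarrow>
      \<forall>i. ?D x z $ i \<le> K * (?D x y $ i + ?D y z $ i)"
    using coord_dists_triangle by metis
  obtain C where C: "1 \<le> C"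
    "\<And>a b c. nonneg_vec a \<Longrightarrow> nonneg_vec b \<Longrightarrow> nonneg_vec c \<Longrightarrow>
      \<forall>i. c $ i \<le> K * (a $ i + b $ i) \<Longrightarrow> F c \<le> C * (F a + F b)"
    using monotone_quasi_subadditive_triangle [OF mono F K(1)] by metis
  have "\<forall>x\<in>?Y. \<forall>y\<in>?Y. \<forall>z\<in>?Y. F (?D x z) \<le> C * (F (?D x y) + F (?D y z))"
  proof (intro ballI)
    fix x y z
    assume "x \<in> ?Y" "y \<in> ?Y" "z \<in> ?Y"
    then show "F (?D x z) \<le> C * (F (?D x y) + F (?D y z))"
      by (intro C(2) K(2)) (simp_all add: nonneg_vec_coord_dists)
  qed
  moreover have "F (?D x y) = 0 \<longleftrightarrow> x = y" if "x \<in> ?Y" "y \<in> ?Y" for x y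
    using \<open>amenable F\<close> that
    by (simp add: amenable_def nonneg_vec_coord_dists coord_dists_eq_0_iff)
  moreover have "0 \<le> F (?D x y)" and "F (?D x y) = F (?D y x)" if "x \<in> ?Y" "y \<in> ?Y" for x y
    using nonneg that by (simp_all add: nonneg_vec_coord_dists coord_dists_commute)
  ultimately show ?thesis
    unfolding b_metric_on_def using C(1) by (intro conjI ballI exI [of _ C]) auto
qed

end

theorem proposition3p1:
  fixes F :: "real^'n \<Rightarrow> real" and s :: real
  assumes "\<forall>x. nonneg_vec x \<longrightarrow> F x \<ge> 0"
    and "amenable F"
    and "monotone_F F"
    and "quasi_subadditive s F"
  shows "b_metric_preserving TYPE('a) F"
  unfolding b_metric_preserving_def
proof (intro allI impI)
  fix X :: "'n \<Rightarrow> 'a set" and d :: "'n \<Rightarrow> 'a \<Rightarrow> 'a \<Rightarrow> real"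
  assume "\<forall>i. b_metric_on (X i) (d i)"
  from b_metric_on_compose [OF this [rule_format] assms]
  show "b_metric_on {x. \<forall>i. x $ i \<in> X i} (\<lambda>x y. F (\<chi> i. d i (x $ i) (y $ i)))"
    unfolding coord_dists_def .
qed

end
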